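(* Let $f(z)=e^z$ and $U=\mathbb{C}\setminus[0,\infty)$. Then $\|\mathrm{D} f(\zeta)\|_U^U>1$ for all $\zeta\in f^{-1}(U)$. Moreover, if $(\zeta_n)$ is a sequence in $f^{-1}(U)$ with $\|\mathrm{D} f(\zeta_n)\|_U^U\to 1$ as $n\to\infty$, then $\min\bigl(|\zeta_n|,\mathrm{Arg}(\zeta_n)\bigr)\to 0$ as $n\to\infty$.
   Context: The hyperbolic metric on $U=\mathbb{C}\setminus[0,\infty)$ has density $\rho_U(z)=\dfrac{1}{2|z|\sin(\arg(z)/2)}$, where $\arg(z)\in(0,2\pi)$. For $\zeta\in f^{-1}(U)$ the hyperbolic derivative is $\|\mathrm{D} f(\zeta)\|_U^U = |f'(\zeta)|\cdot \rho_U(f(\zeta))/\rho_U(\zeta)$. $\mathrm{Arg}(z)\in(-\pi,\pi]$ denotes the principal argument. *)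

theory Defs
  imports "HOL-Analysis.Analysis"
begin

definition slitU :: "complex set" where
  "slitU = - (complex_of_real ` {0..})"

text \<open>Hyperbolic density of U; arg(z) in (0, 2 pi) is Arg2pi z (which lies in [0,2pi),
  and in (0,2pi) for z in U).\<close>
definition rhoU :: "complex \<Rightarrow> real" where
  "rhoU z = 1 / (2 * cmod z * sin (Arg2pi z / 2))"

definition hypDexp :: "complex \<Rightarrow> real" where
  "hypDexp \<zeta> = cmod (deriv exp \<zeta>) * rhoU (exp \<zeta>) / rhoU \<zeta>"

end

theory Submission
  imports Defs
begin

(* Write z = x + iy with r = |z|.  In Cartesian form the density of the slit
   plane U is rhoU(w)^2 = 1 / (2|w|(|w| - Re w)), so for w = exp z one gets
   2|w|(|w| - Re w) = 2 e^(2x) (1 - cos y), and the factor e^(2x) cancels against |exp' z|^2: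
       hypDexp(z)^2 (1 - cos y) = r (r - x).
   Using 1 - cos y <= y^2/2 = (r - x)(r + x)/2 and dividing by r - x > 0 gives the lower bound
       2r / (r + x) <= hypDexp(z)^2,
   whose left-hand side exceeds 1 because |x| < r (note y <> 0 since exp z is not on the
   positive axis).  If hypDexp(z_n) -> 1, the bound squeezes
   2 r_n / (r_n + x_n) -> 1, i.e. Re z_n / |z_n| -> 1; then z_n / |z_n| -> 1 and by continuity
   of Arg at 1 we even get Arg z_n -> 0, which forces the minimum in the theorem to 0.
   The file first treats the slit plane and its density, then the identity and lower bound
   for hypDexp, then the limit argument, and finally assembles the theorem. *)

lemma slitU_iff: "w \<in> slitU \<longleftrightarrow> \<not> (Im w = 0 \<and> Re w \<ge> 0)"
proof -
  have "w \<in> complex_of_real ` {0..} \<longleftrightarrow> Im w = 0 \<and> Re w \<ge> 0"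
  proof
    assume "Im w = 0 \<and> Re w \<ge> 0"
    then have "w = complex_of_real (Re w)" "Re w \<in> {0..}" by (simp_all add: complex_eq_iff)
    then show "w \<in> complex_of_real ` {0..}" by (metis imageI)
  qed auto
  then show ?thesis unfolding slitU_def by simp
qed

lemma slitU_if_exp_in_slitU: "exp z \<in> slitU \<Longrightarrow> z \<in> slitU"
  using slitU_iff[of z] slitU_iff[of "exp z"] by (auto simp: Re_exp Im_exp)

text \<open>The density of U in Cartesian form, via |w| cos(arg w) = Re w and the half-angle formula
  1 - cos t = 2 sin(t/2)^2.\<close>
lemma rhoU_squared:
  assumes "w \<in> slitU"
  shows "rhoU w > 0" "(rhoU w)^2 * (2 * cmod w * (cmod w - Re w)) = 1"
proof -
  define t where "t = Arg2pi w"
  have norm_pos: "cmod w > 0" using assms unfolding slitU_iff by auto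
  have "t \<noteq> 0" using assms Arg2pi_eq_0[of w] complex_is_Real_iff unfolding slitU_iff t_def by auto
  moreover have "0 \<le> t" "t < 2 * pi" using Arg2pi t_def by auto
  ultimately have sin_pos: "sin (t / 2) > 0" by (intro sin_gt_zero) auto
  show "rhoU w > 0" unfolding rhoU_def t_def[symmetric] using sin_pos norm_pos by simp
  have re_w: "cmod w * cos t = Re w" using cos_Arg2pi t_def by simp
  have half_angle: "cos t = 1 - 2 * sin (t / 2)^2" using cos_double_sin[of "t / 2"] by simp
  have "2 * cmod w * (cmod w - Re w) = 4 * (cmod w)^2 * sin (t / 2)^2"
    unfolding re_w[symmetric] half_angle by (simp add: algebra_simps power2_eq_square)
  then show "(rhoU w)^2 * (2 * cmod w * (cmod w - Re w)) = 1"
    unfolding rhoU_def t_def[symmetric] using sin_pos norm_pos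
    by (simp add: field_simps power2_eq_square)
qed

lemma hypDexp_squared:
  assumes "exp z \<in> slitU"
  shows "hypDexp z > 0" "cos (Im z) < 1"
    "(hypDexp z)^2 * (1 - cos (Im z)) = cmod z * (cmod z - Re z)"
proof -
  have deriv_exp: "deriv exp z = exp z" by (rule DERIV_imp_deriv) (rule DERIV_exp)
  have norm_exp: "cmod (exp z) = exp (Re z)" by (simp add: norm_exp_eq_Re)
  have re_exp: "Re (exp z) = exp (Re z) * cos (Im z)" by (simp add: Re_exp)
  note rho_z = rhoU_squared[OF slitU_if_exp_in_slitU[OF assms]]
  note rho_w = rhoU_squared[OF assms]
  show "hypDexp z > 0" unfolding hypDexp_def deriv_exp using rho_z(1) rho_w(1) by simp
  have "cos (Im z) \<noteq> 1" using rho_w(2) norm_exp re_exp by auto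
  then show cos_lt: "cos (Im z) < 1" using cos_le_one[of "Im z"] by linarith
  have rho_w_sq: "(rhoU (exp z))^2 = 1 / (2 * exp (Re z)^2 * (1 - cos (Im z)))"
    using rho_w(2) cos_lt unfolding norm_exp re_exp by (simp add: field_simps power2_eq_square)
  have denom: "2 * cmod z * (cmod z - Re z) \<noteq> 0" using rho_z(2) by auto
  have rho_z_sq: "(rhoU z)^2 = 1 / (2 * cmod z * (cmod z - Re z))"
    using rho_z(2) denom by (simp add: eq_divide_eq)
  have "(hypDexp z)^2 = exp (Re z)^2 * (rhoU (exp z))^2 / (rhoU z)^2"
    unfolding hypDexp_def deriv_exp norm_exp by (simp add: power_divide power_mult_distrib)
  also have "\<dots> = cmod z * (cmod z - Re z) / (1 - cos (Im z))"
    unfolding rho_w_sq rho_z_sq using cos_lt denom by (simp add: field_simps power2_eq_square)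
  finally show "(hypDexp z)^2 * (1 - cos (Im z)) = cmod z * (cmod z - Re z)"
    using cos_lt by simp
qed

text \<open>The elementary estimate 1 - cos y \<le> y^2/2, from |sin s| \<le> |s|.\<close>
lemma one_minus_cos_le: "1 - cos y \<le> y^2 / 2" for y :: real
proof -
  have "(sin (y / 2))^2 \<le> (y / 2)^2" using abs_sin_x_le_abs_x by (metis abs_le_square_iff)
  moreover have "cos y = 1 - 2 * sin (y / 2)^2" using cos_double_sin[of "y / 2"] by simp
  ultimately show ?thesis by (simp add: power_divide)
qed

lemma hypDexp_squared_lower_bound:
  assumes "exp z \<in> slitU"
  shows "\<bar>Re z\<bar> < cmod z" "2 * cmod z / (cmod z + Re z) \<le> (hypDexp z)^2"
proof -
  define x y r where "x = Re z" and "y = Im z" and "r = cmod z"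
  note H = hypDexp_squared[OF assms, folded x_def y_def r_def]
  have r_sq: "r^2 = x^2 + y^2" unfolding r_def x_def y_def by (simp add: cmod_power2)
  have "y \<noteq> 0" using H(2) by auto
  then have "x^2 < r^2" using r_sq by simp
  then show x_lt: "\<bar>x\<bar> < r" using r_def by (simp add: power2_less_imp_less abs_less_iff)
  have "r * (r - x) \<le> (hypDexp z)^2 * (y^2 / 2)"
    using H(3) one_minus_cos_le[of y] by (metis mult_left_mono zero_le_power2)
  also have "y^2 = (r - x) * (r + x)" using r_sq by (simp add: algebra_simps power2_eq_square)
  finally have "2 * r * (r - x) \<le> ((hypDexp z)^2 * (r + x)) * (r - x)"
    by (simp add: algebra_simps)
  then have "2 * r \<le> (hypDexp z)^2 * (r + x)" using x_lt by (simp add: mult_le_cancel_right)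
  moreover have "r + x > 0" using x_lt by linarith
  ultimately show "2 * r / (r + x) \<le> (hypDexp z)^2" by (simp add: divide_le_eq)
qed

lemma hypDexp_gt_1:
  assumes "exp z \<in> slitU"
  shows "hypDexp z > 1"
proof -
  note B = hypDexp_squared_lower_bound[OF assms]
  have "1 < 2 * cmod z / (cmod z + Re z)" using B(1) by (simp add: less_divide_eq abs_less_iff)
  then have "1 < (hypDexp z)^2" using B(2) by linarith
  then show ?thesis
    using power_less_imp_less_base[of 1 2 "hypDexp z"] hypDexp_squared(1)[OF assms] by simp
qed

text \<open>If the direction cosines Re(z n) / |z n| tend to 1, then z n / |z n| tends to 1 and
  hence, by continuity of Arg away from the negative real axis, Arg (z n) tends to 0.\<close>
lemma Arg_tendsto_0_if_direction_cosine_tendsto_1: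
  fixes z :: "nat \<Rightarrow> complex"
  assumes nonzero: "\<And>n. z n \<noteq> 0"
    and cosine: "(\<lambda>n. Re (z n) / cmod (z n)) \<longlonglongrightarrow> 1"
  shows "(\<lambda>n. Arg (z n)) \<longlonglongrightarrow> 0"
proof -
  define u where "u n = z n / of_real (cmod (z n))" for n
  have re_u: "Re (u n) = Re (z n) / cmod (z n)" for n unfolding u_def by simp
  have "cmod (u n) = 1" for n using nonzero[of n] unfolding u_def by (simp add: norm_divide)
  then have "(Im (u n))^2 = 1 - (Re (u n))^2" for n by (metis cmod_power2 power_one add_diff_cancel_left')
  then have abs_im_u: "\<bar>Im (u n)\<bar> = sqrt (1 - (Re (u n))^2)" for n by (metis real_sqrt_abs)
  have "(\<lambda>n. sqrt (1 - (Re (u n))^2)) \<longlonglongrightarrow> sqrt (1 - 1^2)"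
    unfolding re_u by (intro tendsto_intros cosine)
  then have "(\<lambda>n. Im (u n)) \<longlonglongrightarrow> 0"
    unfolding abs_im_u[symmetric] by (simp add: tendsto_rabs_zero_cancel)
  then have "u \<longlonglongrightarrow> 1" unfolding tendsto_complex_iff re_u using cosine by simp
  then have "(\<lambda>n. Arg (u n)) \<longlonglongrightarrow> Arg 1" by (rule tendsto_Arg) simp
  moreover have "Arg (u n) = Arg (z n)" for n using nonzero[of n] unfolding u_def by simp
  ultimately show ?thesis by simp
qed

text \<open>Second claim, in the stronger form "Arg (z n) tends to 0": the lower bound, squeezed
  between 1 and hypDexp(z n)^2, which tends to 1, forces the direction cosines to 1.\<close>
lemma Arg_tendsto_0_if_hypDexp_tendsto_1:
  fixes z :: "nat \<Rightarrow> complex"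
  assumes dom: "\<And>n. exp (z n) \<in> slitU" and lim: "(\<lambda>n. hypDexp (z n)) \<longlonglongrightarrow> 1"
  shows "(\<lambda>n. Arg (z n)) \<longlonglongrightarrow> 0"
proof -
  define q where "q n = 2 * cmod (z n) / (cmod (z n) + Re (z n))" for n
  have sum_pos: "cmod (z n) + Re (z n) > 0" and re_lt: "Re (z n) < cmod (z n)" for n
    using hypDexp_squared_lower_bound(1)[OF dom, of n] by (simp_all add: abs_less_iff)
  have norm_pos: "cmod (z n) > 0" for n using sum_pos[of n] re_lt[of n] by linarith
  have q_lower: "1 \<le> q n" for n
    unfolding q_def using sum_pos[of n] re_lt[of n] by (simp add: le_divide_eq)
  have q_upper: "q n \<le> (hypDexp (z n))^2" for n
    unfolding q_def by (rule hypDexp_squared_lower_bound(2)[OF dom])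
  have sq_lim: "(\<lambda>n. (hypDexp (z n))^2) \<longlonglongrightarrow> 1" using tendsto_power[OF lim, of 2] by simp
  have "q \<longlonglongrightarrow> 1"
    by (rule tendsto_sandwich[OF _ _ tendsto_const sq_lim]) (simp_all add: q_lower q_upper)
  then have "(\<lambda>n. 2 / q n - 1) \<longlonglongrightarrow> 2 / 1 - 1" by (intro tendsto_intros) auto
  moreover have "Re (z n) / cmod (z n) = 2 / q n - 1" for n
    unfolding q_def using sum_pos[of n] norm_pos[of n] by (simp add: field_simps)
  ultimately have "(\<lambda>n. Re (z n) / cmod (z n)) \<longlonglongrightarrow> 1" by simp
  moreover have "z n \<noteq> 0" for n using norm_pos[of n] by auto
  ultimately show ?thesis by (intro Arg_tendsto_0_if_direction_cosine_tendsto_1)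
qed

theorem mainTheorem4:
  shows "(\<forall>\<zeta>. exp \<zeta> \<in> slitU \<longrightarrow> hypDexp \<zeta> > 1)
    \<and> (\<forall>\<zeta> :: nat \<Rightarrow> complex. (\<forall>n. exp (\<zeta> n) \<in> slitU) \<longrightarrow>
          (\<lambda>n. hypDexp (\<zeta> n)) \<longlonglongrightarrow> 1 \<longrightarrow>
          (\<lambda>n. min (cmod (\<zeta> n)) (Arg (\<zeta> n))) \<longlonglongrightarrow> 0)"
proof (intro conjI allI impI)
  fix z :: complex
  assume "exp z \<in> slitU"
  then show "hypDexp z > 1" by (rule hypDexp_gt_1)
next
  fix z :: "nat \<Rightarrow> complex"
  assume "\<forall>n. exp (z n) \<in> slitU" and "(\<lambda>n. hypDexp (z n)) \<longlonglongrightarrow> 1"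
  then have Arg_lim: "(\<lambda>n. Arg (z n)) \<longlonglongrightarrow> 0"
    by (simp add: Arg_tendsto_0_if_hypDexp_tendsto_1)
  have "norm (min (cmod (z n)) (Arg (z n))) \<le> norm (Arg (z n))" for n
    using norm_ge_zero[of "z n"] unfolding real_norm_def by linarith
  then show "(\<lambda>n. min (cmod (z n)) (Arg (z n))) \<longlonglongrightarrow> 0"
    by (intro Lim_null_comparison[OF always_eventually tendsto_norm_zero[OF Arg_lim]]) simp
qed

end
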